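(* Let $F$ be an algebraically closed field of characteristic $0$ and let $\hat{\mathbb{Z}}$ be the profinite completion of $\mathbb{Z}$. Suppose $$0\to\hat{\mathbb{Z}}\overset{i_H}{\to} H\overset{\mathrm{ex}_H}{\to}F^{\times}\to1\quad\text{and}\quad 0\to\hat{\mathbb{Z}}\overset{i_G}{\to} G\overset{\mathrm{ex}_G}{\to}F^{\times}\to1$$ are exact sequences of abelian groups, where $H$ and $G$ are divisible torsion-free abelian groups. Then there is a group isomorphism $\sigma:H\to G$ such that $\mathrm{ex}_H=\mathrm{ex}_G\circ\sigma$. *)

theory Defs
  imports "HOL-Algebra.Algebra" "HOL-Computational_Algebra.Polynomial"
begin

text \<open>The profinite completion of the integers, realised as the inverse limit of the
  groups Z/nZ (n > 0): compatible families (a_n), a_n in {0..n-1},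
  with a_m mod n = a_n whenever n divides m. The index 0 is unused (value fixed to 0).\<close>
definition Zhat :: "(nat \<Rightarrow> int) monoid" where
  "Zhat = \<lparr> carrier = {a. a 0 = 0 \<and> (\<forall>n>0. 0 \<le> a n \<and> a n < int n) \<and>
                          (\<forall>m n. 0 < m \<and> 0 < n \<and> n dvd m \<longrightarrow> a m mod int n = a n)},
            Group.monoid.mult = (\<lambda>a b n. if n = 0 then 0 else (a n + b n) mod int n),
            Group.monoid.one = (\<lambda>n. 0) \<rparr>"

definition mult_group_of :: "'f::field monoid" where
  "mult_group_of = \<lparr> carrier = UNIV - {0}, Group.monoid.mult = (*), Group.monoid.one = 1 \<rparr>"

definition divisible_group :: "('a, 'b) monoid_scheme \<Rightarrow> bool" where
  "divisible_group H \<longleftrightarrow>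
     (\<forall>x\<in>carrier H. \<forall>n::nat. n > 0 \<longrightarrow> (\<exists>y\<in>carrier H. y [^]\<^bsub>H\<^esub> n = x))"

definition torsion_free_group :: "('a, 'b) monoid_scheme \<Rightarrow> bool" where
  "torsion_free_group H \<longleftrightarrow>
     (\<forall>x\<in>carrier H. \<forall>n::nat. n > 0 \<longrightarrow> x [^]\<^bsub>H\<^esub> n = \<one>\<^bsub>H\<^esub> \<longrightarrow> x = \<one>\<^bsub>H\<^esub>)"

definition short_exact :: "('a, 'x) monoid_scheme \<Rightarrow> ('b, 'y) monoid_scheme \<Rightarrow> ('c, 'z) monoid_scheme
     \<Rightarrow> ('a \<Rightarrow> 'b) \<Rightarrow> ('b \<Rightarrow> 'c) \<Rightarrow> bool" where
  "short_exact A B C i p \<longleftrightarrow>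
     i \<in> hom A B \<and> inj_on i (carrier A) \<and>
     p \<in> hom B C \<and> p ` carrier B = carrier C \<and>
     i ` carrier A = {b \<in> carrier B. p b = \<one>\<^bsub>C\<^esub>}"

end

theory Submission
  imports Defs
begin

(* In a divisible torsion-free group every x has a unique n-th root x^(1/n), so
   x \<mapsto> (ex (x^(1/n)))_n maps H homomorphically into the inverse limit of F^x along
   the power maps. Exactness makes this an isomorphism. It is injective because an element of
   the kernel Zhat that stays in the kernel after taking n-th roots for all n is divisible by
   every n, hence zero. It is onto because r \<mapsto> ex (i(r)^(1/n)) identifies Z/n with the
   n-th roots of unity (injective by the same argument, onto by counting), so every compatible
   system of roots of unity comes from an element of Zhat. H and G are thus isomorphic over F^x
   to the same group. *)

lemma
  fixes n :: nat
  assumes "n > 0"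
  shows finite_nth_roots_unity: "finite {z::'a::idom. z ^ n = 1}"
    and card_nth_roots_unity_le: "card {z::'a::idom. z ^ n = 1} \<le> n"
proof -
  define p :: "'a poly" where "p = monom 1 n - 1"
  have poly_p: "poly p z = z ^ n - 1" for z
    by (simp add: p_def poly_monom)
  have "p \<noteq> 0"
    using poly_p[of 0] assms by (auto simp: power_0_left)
  moreover have "degree p \<le> n"
    unfolding p_def by (intro degree_diff_le) (auto simp: degree_monom_le)
  moreover have "{z. z ^ n = 1} = {z. poly p z = 0}"
    by (simp add: poly_p)
  ultimately show "finite {z::'a. z ^ n = 1}" "card {z::'a. z ^ n = 1} \<le> n"
    using poly_roots_finite card_poly_roots_bound by (metis le_trans)+
qed

lemma carrier_Zhat:
  "a \<in> carrier Zhat \<longleftrightarrow> a 0 = 0 \<and> (\<forall>n>0. 0 \<le> a n \<and> a n < int n) \<and>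
     (\<forall>m n. 0 < m \<and> 0 < n \<and> n dvd m \<longrightarrow> a m mod int n = a n)"
  by (simp add: Zhat_def)

lemma mult_Zhat: "a \<otimes>\<^bsub>Zhat\<^esub> b = (\<lambda>n. if n = 0 then 0 else (a n + b n) mod int n)"
  by (simp add: Zhat_def)

lemma one_Zhat: "\<one>\<^bsub>Zhat\<^esub> = (\<lambda>n. 0)"
  by (simp add: Zhat_def)

lemma Zhat_one_closed: "\<one>\<^bsub>Zhat\<^esub> \<in> carrier Zhat"
  by (simp add: Zhat_def)

lemma Zhat_mult_closed:
  assumes a: "a \<in> carrier Zhat" and b: "b \<in> carrier Zhat"
  shows "a \<otimes>\<^bsub>Zhat\<^esub> b \<in> carrier Zhat"
  unfolding carrier_Zhat mult_Zhat
proof (intro conjI allI impI)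
  fix m n :: nat
  assume mn: "0 < m \<and> 0 < n \<and> n dvd m"
  then have "((a m + b m) mod int m) mod int n = (a m mod int n + b m mod int n) mod int n"
    by (simp add: mod_mod_cancel mod_add_eq)
  also have "\<dots> = (a n + b n) mod int n"
    using a b mn by (simp add: carrier_Zhat)
  finally show "(if m = 0 then 0 else (a m + b m) mod int m) mod int n =
      (if n = 0 then 0 else (a n + b n) mod int n)"
    using mn by simp
qed auto

lemma Zhat_nat_pow_closed: "c \<in> carrier Zhat \<Longrightarrow> c [^]\<^bsub>Zhat\<^esub> (k::nat) \<in> carrier Zhat"
  by (induction k) (simp_all add: Zhat_one_closed Zhat_mult_closed)

lemma Zhat_nat_pow:
  assumes "c \<in> carrier Zhat" "n > 0"
  shows "(c [^]\<^bsub>Zhat\<^esub> (k::nat)) n = int k * c n mod int n"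
proof (induction k)
  case (Suc k)
  then show ?case
    using assms(2) by (simp add: mult_Zhat mod_add_right_eq distrib_right add.commute)
qed (simp add: one_Zhat)

lemma Zhat_eq_one:
  assumes "a \<in> carrier Zhat" "\<And>n. n > 0 \<Longrightarrow> a n = 0"
  shows "a = \<one>\<^bsub>Zhat\<^esub>"
  using assms by (auto simp: one_Zhat carrier_Zhat intro!: ext) (metis gr0I)

definition Zhat_of_int :: "int \<Rightarrow> nat \<Rightarrow> int" where
  "Zhat_of_int r = (\<lambda>n. if n = 0 then 0 else r mod int n)"

lemma Zhat_of_int_closed: "Zhat_of_int r \<in> carrier Zhat"
  unfolding carrier_Zhat Zhat_of_int_def by (auto simp: mod_mod_cancel)

lemma Zhat_of_int_apply: "n > 0 \<Longrightarrow> Zhat_of_int r n = r mod int n"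
  by (simp add: Zhat_of_int_def)

lemma Zhat_of_int_0: "Zhat_of_int 0 = \<one>\<^bsub>Zhat\<^esub>"
  by (auto simp: Zhat_of_int_def one_Zhat)

locale divisible_torsion_free = comm_group G for G (structure) +
  assumes divisible: "divisible_group G" and torsion_free: "torsion_free_group G"
begin

lemma nat_pow_inj:
  fixes n :: nat
  assumes "n > 0" "x \<in> carrier G" "y \<in> carrier G" "x [^] n = y [^] n"
  shows "x = y"
proof -
  have "(x \<otimes> inv y) [^] n = x [^] n \<otimes> inv (y [^] n)"
    using assms(2,3) by (simp add: nat_pow_distrib nat_pow_inv)
  also have "\<dots> = \<one>"
    using assms by simp
  finally have "x \<otimes> inv y = \<one>"
    using torsion_free assms unfolding torsion_free_group_def by simp
  then show ?thesis
    using assms by (metis inv_equality inv_inv inv_closed)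
qed

definition nth_root :: "nat \<Rightarrow> 'a \<Rightarrow> 'a" where
  "nth_root n x = (THE y. y \<in> carrier G \<and> y [^] n = x)"

lemma nth_root_eq: "n > 0 \<Longrightarrow> y \<in> carrier G \<Longrightarrow> y [^] n = x \<Longrightarrow> nth_root n x = y"
  unfolding nth_root_def by (rule the_equality) (auto intro: nat_pow_inj)

lemma
  assumes "n > 0" "x \<in> carrier G"
  shows nth_root_closed: "nth_root n x \<in> carrier G"
    and nth_root_pow: "nth_root n x [^] n = x"
proof -
  obtain y where "y \<in> carrier G" "y [^] n = x"
    using divisible assms unfolding divisible_group_def by blast
  then show "nth_root n x \<in> carrier G" "nth_root n x [^] n = x"
    using nth_root_eq assms by simp_all
qed

lemma nth_root_1: "x \<in> carrier G \<Longrightarrow> nth_root 1 x = x"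
  by (rule nth_root_eq) auto

lemma nth_root_one: "n > 0 \<Longrightarrow> nth_root n \<one> = \<one>"
  by (rule nth_root_eq) auto

lemma nth_root_mult:
  "n > 0 \<Longrightarrow> x \<in> carrier G \<Longrightarrow> y \<in> carrier G \<Longrightarrow> nth_root n (x \<otimes> y) = nth_root n x \<otimes> nth_root n y"
  by (rule nth_root_eq) (auto simp: nat_pow_distrib nth_root_closed nth_root_pow)

lemma nth_root_mult_index_pow:
  assumes "n > 0" "m > 0" "x \<in> carrier G"
  shows "nth_root (n * m) x [^] m = nth_root n x"
proof -
  have "(nth_root (n * m) x [^] m) [^] n = x"
    using assms by (simp add: nat_pow_pow nth_root_closed nth_root_pow mult.commute)
  then show ?thesis
    using assms by (intro nth_root_eq[symmetric]) (auto simp: nth_root_closed)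
qed

end

(* The inverse limit of F^x along the maps x \<mapsto> x^m; the unused index 0 is fixed to 1. *)
definition compatible_roots :: "(nat \<Rightarrow> 'f::field) monoid" where
  "compatible_roots =
     \<lparr> carrier = {x. x 0 = 1 \<and> (\<forall>n>0. x n \<noteq> 0) \<and> (\<forall>n>0. \<forall>m>0. x (n * m) ^ m = x n)},
       Group.monoid.mult = (\<lambda>x y n. x n * y n),
       Group.monoid.one = (\<lambda>n. 1) \<rparr>"

locale Zhat_extension = divisible_torsion_free H for H :: "('h, 'c) monoid_scheme" (structure) +
  fixes incl :: "(nat \<Rightarrow> int) \<Rightarrow> 'h" and ex :: "'h \<Rightarrow> 'f::field"
  assumes exact: "short_exact Zhat H (mult_group_of :: 'f monoid) incl ex"
begin

lemma ex_nonzero: "x \<in> carrier H \<Longrightarrow> ex x \<noteq> 0"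
  using exact unfolding short_exact_def hom_def mult_group_of_def by auto

lemma ex_mult: "x \<in> carrier H \<Longrightarrow> y \<in> carrier H \<Longrightarrow> ex (x \<otimes> y) = ex x * ex y"
  using exact unfolding short_exact_def hom_def mult_group_of_def by auto

lemma ex_surj: "y \<noteq> 0 \<Longrightarrow> \<exists>x\<in>carrier H. ex x = y"
  using exact unfolding short_exact_def mult_group_of_def by (simp add: set_eq_iff image_iff) (metis)

lemma ex_one: "ex \<one> = 1"
  using ex_mult[of \<one> \<one>] ex_nonzero[of \<one>] by simp

lemma ex_nat_pow: "x \<in> carrier H \<Longrightarrow> ex (x [^] (k::nat)) = ex x ^ k"
  by (induction k) (simp_all add: ex_one ex_mult)

lemma image_incl: "incl ` carrier Zhat = {x \<in> carrier H. ex x = 1}"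
  using exact unfolding short_exact_def mult_group_of_def by simp

lemma incl_closed: "a \<in> carrier Zhat \<Longrightarrow> incl a \<in> carrier H"
  using image_incl by auto

lemma ex_incl: "a \<in> carrier Zhat \<Longrightarrow> ex (incl a) = 1"
  using image_incl by auto

lemma inj_on_incl: "inj_on incl (carrier Zhat)"
  using exact unfolding short_exact_def by simp

lemma incl_mult: "a \<in> carrier Zhat \<Longrightarrow> b \<in> carrier Zhat \<Longrightarrow> incl (a \<otimes>\<^bsub>Zhat\<^esub> b) = incl a \<otimes> incl b"
  using exact unfolding short_exact_def hom_def by auto

lemma incl_one: "incl \<one>\<^bsub>Zhat\<^esub> = \<one>"
proof -
  have "\<one>\<^bsub>Zhat\<^esub> \<otimes>\<^bsub>Zhat\<^esub> \<one>\<^bsub>Zhat\<^esub> = \<one>\<^bsub>Zhat\<^esub>"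
    by (auto simp: one_Zhat mult_Zhat)
  then have "incl \<one>\<^bsub>Zhat\<^esub> \<otimes> incl \<one>\<^bsub>Zhat\<^esub> = \<one> \<otimes> incl \<one>\<^bsub>Zhat\<^esub>"
    using incl_mult[OF Zhat_one_closed Zhat_one_closed] incl_closed[OF Zhat_one_closed] by simp
  then show ?thesis
    using incl_closed[OF Zhat_one_closed] right_cancel by blast
qed

lemma incl_nat_pow: "a \<in> carrier Zhat \<Longrightarrow> incl (a [^]\<^bsub>Zhat\<^esub> (k::nat)) = incl a [^] k"
  by (induction k) (simp_all add: incl_one incl_mult Zhat_nat_pow_closed)

lemma ex_eq_imp_incl_mult:
  assumes "x \<in> carrier H" "y \<in> carrier H" "ex x = ex y"
  obtains c where "c \<in> carrier Zhat" "x = incl c \<otimes> y"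
proof -
  have "ex (x \<otimes> inv y) * ex y = ex x"
    using assms ex_mult[of "x \<otimes> inv y" y] by (simp add: m_assoc)
  then have "x \<otimes> inv y \<in> incl ` carrier Zhat"
    using assms ex_nonzero[of y] by (simp add: image_incl)
  moreover have "x = (x \<otimes> inv y) \<otimes> y"
    using assms by (simp add: m_assoc)
  ultimately show ?thesis
    using that by auto
qed

definition roots :: "'h \<Rightarrow> nat \<Rightarrow> 'f" where
  "roots x n = (if n = 0 then 1 else ex (nth_root n x))"

lemma roots_1: "x \<in> carrier H \<Longrightarrow> roots x 1 = ex x"
  by (metis roots_def nth_root_1 one_neq_zero)

lemma roots_nonzero: "x \<in> carrier H \<Longrightarrow> roots x n \<noteq> 0"
  by (simp add: roots_def ex_nonzero nth_root_closed)

lemma roots_one: "roots \<one> n = 1"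
  by (simp add: roots_def nth_root_one ex_one)

lemma roots_mult: "x \<in> carrier H \<Longrightarrow> y \<in> carrier H \<Longrightarrow> roots (x \<otimes> y) n = roots x n * roots y n"
  by (simp add: roots_def nth_root_mult ex_mult nth_root_closed)

lemma roots_compatible:
  "n > 0 \<Longrightarrow> m > 0 \<Longrightarrow> x \<in> carrier H \<Longrightarrow> roots x (n * m) ^ m = roots x n"
  by (simp add: roots_def ex_nat_pow[symmetric] nth_root_closed nth_root_mult_index_pow)

lemma roots_closed: "x \<in> carrier H \<Longrightarrow> roots x \<in> carrier compatible_roots"
  by (simp add: compatible_roots_def roots_nonzero roots_compatible) (simp add: roots_def)

lemma roots_incl_pow: "a \<in> carrier Zhat \<Longrightarrow> n > 0 \<Longrightarrow> roots (incl a) n ^ n = 1"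
  using roots_compatible[of 1 n "incl a"] roots_1[of "incl a"] by (simp add: ex_incl incl_closed)

lemma roots_incl_eqD:
  assumes a: "a \<in> carrier Zhat" and b: "b \<in> carrier Zhat" and n: "n > 0"
    and eq: "roots (incl a) n = roots (incl b) n"
  shows "a n = b n"
proof -
  let ?u = "nth_root n (incl a)" and ?v = "nth_root n (incl b)"
  have uv: "?u \<in> carrier H" "?v \<in> carrier H"
    using a b n by (simp_all add: nth_root_closed incl_closed)
  moreover have "ex ?u = ex ?v"
    using n eq by (simp add: roots_def)
  ultimately obtain c where c: "c \<in> carrier Zhat" "?u = incl c \<otimes> ?v"
    by (rule ex_eq_imp_incl_mult)
  have "incl a = (incl c \<otimes> ?v) [^] n"
    using nth_root_pow[of n "incl a"] c(2) n a by (simp add: incl_closed)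
  also have "\<dots> = incl (c [^]\<^bsub>Zhat\<^esub> n \<otimes>\<^bsub>Zhat\<^esub> b)"
    using n b c(1) uv by (simp add: nat_pow_distrib incl_closed incl_nat_pow incl_mult
        Zhat_nat_pow_closed nth_root_pow)
  finally have "a = c [^]\<^bsub>Zhat\<^esub> n \<otimes>\<^bsub>Zhat\<^esub> b"
    using inj_on_incl a b c(1) by (simp add: inj_on_eq_iff Zhat_mult_closed Zhat_nat_pow_closed)
  then have "a n = (int n * c n mod int n + b n) mod int n"
    using n c(1) by (simp add: mult_Zhat Zhat_nat_pow)
  also have "\<dots> = b n"
    using n b by (simp add: mod_add_left_eq[symmetric] carrier_Zhat)
  finally show ?thesis .
qed

(* The analogue of exp (2 pi i r / n). *)
definition root_of_unity :: "nat \<Rightarrow> int \<Rightarrow> 'f" where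
  "root_of_unity n r = roots (incl (Zhat_of_int r)) n"

lemma bij_betw_root_of_unity:
  assumes n: "n > 0"
  shows "bij_betw (root_of_unity n) {0..<int n} {z. z ^ n = 1}"
proof -
  have inj: "inj_on (root_of_unity n) {0..<int n}"
  proof (rule inj_onI)
    fix r s
    assume "r \<in> {0..<int n}" "s \<in> {0..<int n}" and "root_of_unity n r = root_of_unity n s"
    then show "r = s"
      using roots_incl_eqD[OF Zhat_of_int_closed Zhat_of_int_closed n, of r s]
      by (simp add: root_of_unity_def Zhat_of_int_apply n)
  qed
  moreover have "root_of_unity n ` {0..<int n} \<subseteq> {z. z ^ n = 1}"
    using roots_incl_pow[OF Zhat_of_int_closed n] by (auto simp: root_of_unity_def)
  moreover have "card {z::'f. z ^ n = 1} \<le> card (root_of_unity n ` {0..<int n})"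
    using card_nth_roots_unity_le[OF n] by (simp add: card_image[OF inj])
  ultimately show ?thesis
    by (simp add: bij_betw_def card_seteq finite_nth_roots_unity[OF n])
qed

lemma roots_incl:
  assumes a: "a \<in> carrier Zhat" and n: "n > 0"
  shows "roots (incl a) n = root_of_unity n (a n)"
proof -
  obtain r where r: "r \<in> {0..<int n}" "roots (incl a) n = root_of_unity n r"
    using bij_betw_root_of_unity[OF n] roots_incl_pow[OF a n]
    by (metis (mono_tags, lifting) bij_betw_imp_surj_on imageE mem_Collect_eq)
  then have "a n = r"
    using roots_incl_eqD[OF a Zhat_of_int_closed n] by (simp add: root_of_unity_def Zhat_of_int_apply n)
  with r show ?thesis
    by simp
qed

lemma inj_on_roots: "inj_on roots (carrier H)"
proof (rule inj_onI)
  fix x y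
  assume x: "x \<in> carrier H" and y: "y \<in> carrier H" and eq: "roots x = roots y"
  then have "ex x = ex y"
    by (metis roots_1)
  with x y obtain a where a: "a \<in> carrier Zhat" "x = incl a \<otimes> y"
    by (rule ex_eq_imp_incl_mult)
  have "a n = 0" if n: "n > 0" for n
  proof -
    have "roots (incl a) n = 1"
      using fun_cong[OF eq, of n] a y roots_nonzero[OF y] by (simp add: roots_mult incl_closed)
    then have "root_of_unity n (a n) = root_of_unity n 0"
      using roots_incl[OF a(1) n] by (simp add: root_of_unity_def Zhat_of_int_0 incl_one roots_one)
    moreover have "a n \<in> {0..<int n}"
      using a(1) n by (simp add: carrier_Zhat)
    ultimately show "a n = 0"
      using bij_betw_root_of_unity[OF n] n by (auto simp: bij_betw_def inj_on_eq_iff)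
  qed
  then have "a = \<one>\<^bsub>Zhat\<^esub>"
    using Zhat_eq_one a(1) by blast
  then show "x = y"
    using a(2) y by (simp add: incl_one)
qed

lemma lift_compatible_roots_of_unity:
  assumes unity: "\<And>n. n > 0 \<Longrightarrow> \<zeta> n ^ n = 1"
    and compatible: "\<And>n m. n > 0 \<Longrightarrow> m > 0 \<Longrightarrow> \<zeta> (n * m) ^ m = \<zeta> n"
  obtains a where "a \<in> carrier Zhat" "\<And>n. n > 0 \<Longrightarrow> roots (incl a) n = \<zeta> n"
proof -
  define a where
    "a n = (if n = 0 then 0 else the_inv_into {0..<int n} (root_of_unity n) (\<zeta> n))" for n
  have a: "a n \<in> {0..<int n}" "root_of_unity n (a n) = \<zeta> n" if n: "n > 0" for n
  proof -
    have inj: "inj_on (root_of_unity n) {0..<int n}"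
      and im: "\<zeta> n \<in> root_of_unity n ` {0..<int n}"
      using bij_betw_root_of_unity[OF n] unity[OF n] by (auto simp: bij_betw_def)
    show "a n \<in> {0..<int n}" "root_of_unity n (a n) = \<zeta> n"
      using n the_inv_into_into[OF inj im subset_refl] f_the_inv_into_f[OF inj im]
      by (simp_all add: a_def)
  qed
  have a_Zhat: "a \<in> carrier Zhat"
    unfolding carrier_Zhat
  proof (intro conjI allI impI)
    fix m n :: nat
    assume mn: "0 < m \<and> 0 < n \<and> n dvd m"
    then obtain k where m: "m = n * k"
      by (auto elim: dvdE)
    have n: "n > 0" and k: "k > 0"
      using mn m by auto
    have "root_of_unity n (a m) = root_of_unity m (a m) ^ k"
      unfolding root_of_unity_def m
      using roots_compatible[OF n k incl_closed[OF Zhat_of_int_closed]] by simp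
    also have "\<dots> = \<zeta> m ^ k"
      using a(2)[of m] mn by simp
    also have "\<dots> = root_of_unity n (a n)"
      using compatible[OF n k] a(2)[OF n] m by simp
    finally have "Zhat_of_int (a m) n = Zhat_of_int (a n) n"
      unfolding root_of_unity_def by (rule roots_incl_eqD[OF Zhat_of_int_closed Zhat_of_int_closed n])
    then show "a m mod int n = a n"
      using a(1)[OF n] n by (simp add: Zhat_of_int_apply)
  qed (use a(1) in \<open>auto simp: a_def\<close>)
  moreover have "roots (incl a) n = \<zeta> n" if "n > 0" for n
    using roots_incl[OF a_Zhat that] a(2)[OF that] by simp
  ultimately show ?thesis
    by (rule that)
qed

lemma compatible_roots_subset_image_roots: "carrier compatible_roots \<subseteq> roots ` carrier H"
proof
  fix x :: "nat \<Rightarrow> 'f"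
  assume "x \<in> carrier compatible_roots"
  then have x0: "x 0 = 1" and x_nonzero: "\<And>n. n > 0 \<Longrightarrow> x n \<noteq> 0"
    and x_compatible: "\<And>n m. n > 0 \<Longrightarrow> m > 0 \<Longrightarrow> x (n * m) ^ m = x n"
    by (auto simp: compatible_roots_def)
  obtain y where y: "y \<in> carrier H" "ex y = x 1"
    using ex_surj x_nonzero[of 1] by auto
  define \<zeta> where "\<zeta> n = x n / roots y n" for n
  have "\<zeta> n ^ n = 1" if n: "n > 0" for n
    using x_compatible[OF zero_less_one n] roots_compatible[OF zero_less_one n y(1)]
      x_nonzero[OF zero_less_one] roots_1[OF y(1)] y(2)
    by (simp add: \<zeta>_def power_divide)
  moreover have "\<zeta> (n * m) ^ m = \<zeta> n" if "n > 0" "m > 0" for n m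
    using x_compatible[OF that] roots_compatible[OF that y(1)] by (simp add: \<zeta>_def power_divide)
  ultimately obtain a where a: "a \<in> carrier Zhat" "\<And>n. n > 0 \<Longrightarrow> roots (incl a) n = \<zeta> n"
    using lift_compatible_roots_of_unity by metis
  have "roots (incl a \<otimes> y) = x"
  proof
    fix n
    show "roots (incl a \<otimes> y) n = x n"
    proof (cases "n = 0")
      case True
      then show ?thesis
        using x0 by (simp add: roots_def)
    next
      case False
      then show ?thesis
        using a y(1) roots_nonzero[OF y(1), of n] by (simp add: roots_mult incl_closed \<zeta>_def)
    qed
  qed
  then show "x \<in> roots ` carrier H"
    using a(1) y(1) incl_closed by blast
qed

lemma roots_iso: "roots \<in> iso H compatible_roots"
proof -
  have "roots \<in> hom H compatible_roots"
    by (rule homI) (simp add: roots_closed, simp add: roots_mult compatible_roots_def fun_eq_iff)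
  moreover have "roots ` carrier H = carrier compatible_roots"
    using compatible_roots_subset_image_roots roots_closed by blast
  ultimately show ?thesis
    using inj_on_roots by (simp add: iso_def bij_betw_def)
qed

end

theorem proposition3p8:
  fixes H :: "('h, 'c) monoid_scheme" and G :: "('g, 'd) monoid_scheme"
    and iH :: "(nat \<Rightarrow> int) \<Rightarrow> 'h" and exH :: "'h \<Rightarrow> 'f::{alg_closed_field, field_char_0}"
    and iG :: "(nat \<Rightarrow> int) \<Rightarrow> 'g" and exG :: "'g \<Rightarrow> 'f"
  assumes "comm_group H" and "comm_group G"
    and "divisible_group H" and "torsion_free_group H"
    and "divisible_group G" and "torsion_free_group G"
    and "short_exact Zhat H (mult_group_of :: 'f monoid) iH exH"
    and "short_exact Zhat G (mult_group_of :: 'f monoid) iG exG"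
  shows "\<exists>\<sigma>. \<sigma> \<in> iso H G \<and> (\<forall>x\<in>carrier H. exH x = exG (\<sigma> x))"
proof -
  interpret H: Zhat_extension H iH exH
    using assms by (simp add: Zhat_extension_def Zhat_extension_axioms_def divisible_torsion_free_def
        divisible_torsion_free_axioms_def)
  interpret G: Zhat_extension G iG exG
    using assms by (simp add: Zhat_extension_def Zhat_extension_axioms_def divisible_torsion_free_def
        divisible_torsion_free_axioms_def)
  let ?\<sigma> = "inv_into (carrier G) G.roots \<circ> H.roots"
  have "?\<sigma> \<in> iso H G"
    using iso_set_trans[OF H.roots_iso G.iso_set_sym[OF G.roots_iso]] .
  moreover have "exH x = exG (?\<sigma> x)" if x: "x \<in> carrier H" for x
  proof -
    have "H.roots x \<in> G.roots ` carrier G"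
      using H.roots_closed[OF x] G.roots_iso by (simp add: iso_def bij_betw_def)
    then have "G.roots (?\<sigma> x) = H.roots x"
      by (simp add: f_inv_into_f)
    moreover have "?\<sigma> x \<in> carrier G"
      using \<open>?\<sigma> \<in> iso H G\<close> x by (auto simp: iso_def hom_def)
    ultimately show ?thesis
      using H.roots_1[OF x] G.roots_1 by metis
  qed
  ultimately show ?thesis
    by blast
qed

end
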